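(* Assume the linear setting of the context. The function $f(\phi)=\sum_{k=1}^N c_k^{\rm e}\big(\exp(-q_k-z_k\phi)-1\big)$, $\phi\in\mathbb R$, has a unique minimizer $\phi_{\min}$. If $f(\phi_{\min})<0$, the linear pump-leak system has exactly one steady state $(\mathbf c^*,v^*,\phi^* )\in(0,\infty)^N\times(0,\infty)\times\mathbb R$; if $f(\phi_{\min})\ge 0$, it has no steady state.
   Context: Fix an integer $N\ge2$, real valences $z_1,\dots,z_N$ not all zero, $\mathbf z=(z_1,\dots,z_N)^T$, positive constants $c_1^{\rm e},\dots,c_N^{\rm e}$ with $\sum_kz_kc_k^{\rm e}=0$, a constant $A>0$ and a real number $z$. Let $L$ be a real symmetric positive definite $N\times N$ matrix, $\mathbf p\in\mathbb R^N$ a constant vector, $\zeta>0$, and $\mathbf q=(q_1,\dots,q_N)^T=L^{-1}\mathbf p$. For $\mathbf c\in(0,\infty)^N$, $v>0$, $\phi\in\mathbb R$ set $\gamma_k=\ln(c_k/c_k^{\rm e})$, $\mu_k=\gamma_k+z_k\phi$, $\boldsymbol\mu=(\mu_1,\dots,\mu_N)^T$, $\pi_{\rm w}=\sum_kc_k^{\rm e}-(\sum_kc_k+A/v)$. The linear pump-leak system is $$\frac{d}{dt}(v\mathbf c)=-L\boldsymbol\mu-\mathbf p,\qquad 0=\sum_kz_kc_k+\frac{zA}{v},\qquad \frac{dv}{dt}=-\zeta\pi_{\rm w}.$$ A steady state is a point $(\mathbf c,v,\phi)\in(0,\infty)^N\times(0,\infty)\times\mathbb R$ with $\sum_kz_kc_k+zA/v=0$,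 $L\boldsymbol\mu+\mathbf p=0$ and $\pi_{\rm w}=0$. *)

theory Defs
  imports "HOL-Analysis.Analysis"
begin

text \<open>Species are indexed by a finite type 'n with CARD('n) = N.
  zv = valence vector, ce = reference concentrations c^e.\<close>

definition spd :: "real^'n^'n \<Rightarrow> bool" where
  "spd L \<longleftrightarrow> transpose L = L \<and> (\<forall>x. x \<noteq> 0 \<longrightarrow> x \<bullet> (L *v x) > 0)"

definition chem_pot :: "real^'n \<Rightarrow> real^'n \<Rightarrow> real^'n \<Rightarrow> real \<Rightarrow> real^'n" where
  "chem_pot ce zv c \<phi> = (\<chi> k. ln (c$k / ce$k) + zv$k * \<phi>)"

definition osm_pressure :: "real^'n \<Rightarrow> real \<Rightarrow> real^'n \<Rightarrow> real \<Rightarrow> real" where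
  "osm_pressure ce A c v = (\<Sum>k\<in>UNIV. ce$k) - ((\<Sum>k\<in>UNIV. c$k) + A / v)"

definition steady_state ::
  "real^'n^'n \<Rightarrow> real^'n \<Rightarrow> real^'n \<Rightarrow> real^'n \<Rightarrow> real \<Rightarrow> real
     \<Rightarrow> real^'n \<Rightarrow> real \<Rightarrow> real \<Rightarrow> bool" where
  "steady_state L p ce zv A z c v \<phi> \<longleftrightarrow>
     (\<forall>k. c$k > 0) \<and> v > 0 \<and>
     (\<Sum>k\<in>UNIV. zv$k * c$k) + z * A / v = 0 \<and>
     L *v chem_pot ce zv c \<phi> + p = 0 \<and>
     osm_pressure ce A c v = 0"

definition fq :: "real^'n \<Rightarrow> real^'n \<Rightarrow> real^'n \<Rightarrow> real \<Rightarrow> real" where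
  "fq ce zv q \<phi> = (\<Sum>k\<in>UNIV. ce$k * (exp (- q$k - zv$k * \<phi>) - 1))"

end

theory Submission
  imports Defs "HOL-Real_Asymp.Real_Asymp"
begin

(* Steady states of the linear pump-leak system are parametrised by the potential phi.
   Since L is invertible, L mu + p = 0 forces mu = -q, i.e. the Boltzmann concentrations
   c_k = ce_k exp(-q_k - z_k phi); for them the total concentration is fq(phi) + sum ce and
   the total charge is -fq'(phi).  Osmotic balance then fixes v = -A / fq(phi), admissible
   iff fq(phi) < 0, and electroneutrality becomes fq'(phi) + z fq(phi) = 0, i.e. phi is a
   critical point of exp(z phi) fq(phi).  So steady states correspond bijectively to such
   critical points in the region fq < 0 (lemma steady_state_iff).

   The first section treats an arbitrary real function f with positive second derivative
   that tends to +infinity on both sides: it has a unique global minimiser, and if f takes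
   a negative value then exp(z x) f(x) has exactly one critical point where f < 0 (existence
   by minimising exp(z x) f(x) on a suitable interval, uniqueness because f'/f is strictly
   decreasing where f < 0).  The second section shows that fq is such a function, using
   that electroneutrality of ce forces valences of both signs. *)

section \<open>Convex coercive functions of one real variable\<close>

lemma coercive_outside_interval:
  fixes f :: "real \<Rightarrow> real"
  assumes "filterlim f at_top at_top" and "filterlim f at_top at_bot"
  obtains a b where "a < b" and "\<And>x. x \<le> a \<or> b \<le> x \<Longrightarrow> M < f x"
proof -
  obtain b where b: "\<And>x. b \<le> x \<Longrightarrow> M < f x"
    using assms(1) unfolding filterlim_at_top_dense eventually_at_top_linorder by blast
  obtain a where a: "\<And>x. x \<le> a \<Longrightarrow> M < f x"
    using assms(2) unfolding filterlim_at_top_dense eventually_at_bot_linorder by blast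
  show thesis
    by (rule that[of "min a (b - 1)" b]) (auto intro: a b)
qed

lemma coercive_attains_min:
  fixes f :: "real \<Rightarrow> real"
  assumes cont: "continuous_on UNIV f"
    and top: "filterlim f at_top at_top" and bot: "filterlim f at_top at_bot"
  shows "\<exists>m. \<forall>x. f m \<le> f x"
proof -
  obtain a b where out: "\<And>x. x \<le> a \<or> b \<le> x \<Longrightarrow> f 0 < f x"
    using coercive_outside_interval[OF top bot] by blast
  define I where "I = {min a 0..max b 0}"
  have "\<exists>m\<in>I. \<forall>y\<in>I. f m \<le> f y"
    unfolding I_def by (intro continuous_attains_inf) (auto intro: continuous_on_subset[OF cont])
  then obtain m where min_I: "\<And>y. y \<in> I \<Longrightarrow> f m \<le> f y" by blast
  have "f m \<le> f 0" using min_I unfolding I_def by auto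
  have "f m \<le> f x" for x
  proof (cases "x \<le> a \<or> b \<le> x")
    case True
    then show ?thesis using out[of x] \<open>f m \<le> f 0\<close> by linarith
  next
    case False
    then have "x \<in> I" unfolding I_def by (simp add: min_le_iff_disj le_max_iff_disj)
    then show ?thesis using min_I by blast
  qed
  then show ?thesis by blast
qed

lemma minimiser_unique:
  fixes f f' :: "real \<Rightarrow> real"
  assumes deriv: "\<And>x. (f has_real_derivative f' x) (at x)" and mono: "strict_mono f'"
    and m1: "\<forall>x. f m1 \<le> f x" and m2: "\<forall>x. f m2 \<le> f x"
  shows "m1 = m2"
proof -
  have critical: "f' m = 0" if "\<forall>x. f m \<le> f x" for m
    using DERIV_local_min[OF deriv, of 1 m] that by simp
  have "f' m1 = f' m2" using critical m1 m2 by simp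
  then show ?thesis using strict_mono_eq[OF mono] by simp
qed

text \<open>Existence of a critical point of exp(z x) f(x) with f(x) < 0:
  the minimum of this product over an interval on whose ends f is positive is negative,
  hence attained in the interior.\<close>
lemma weighted_critical_point_exists:
  fixes f f' :: "real \<Rightarrow> real"
  assumes deriv: "\<And>x. (f has_real_derivative f' x) (at x)"
    and top: "filterlim f at_top at_top" and bot: "filterlim f at_top at_bot"
    and neg: "f m < 0"
  shows "\<exists>x. f x < 0 \<and> f' x + z * f x = 0"
proof -
  define h where "h x = exp (z * x) * f x" for x
  obtain a b where out: "\<And>x. x \<le> a \<or> b \<le> x \<Longrightarrow> 0 < f x"
    using coercive_outside_interval[OF top bot] by blast
  have "a < m" "m < b" using out[of m] neg by force+
  have "continuous_on {a..b} h"
    unfolding h_def using DERIV_isCont[OF deriv]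
    by (intro continuous_intros continuous_at_imp_continuous_on) auto
  then obtain x where x: "x \<in> {a..b}" and min_h: "\<And>y. y \<in> {a..b} \<Longrightarrow> h x \<le> h y"
    using continuous_attains_inf[of "{a..b}" h] \<open>a < m\<close> \<open>m < b\<close> by auto
  have "h x \<le> h m" using min_h \<open>a < m\<close> \<open>m < b\<close> by auto
  also have "h m < 0" unfolding h_def using neg by (simp add: mult_pos_neg)
  finally have hx: "h x < 0" .
  then have fx: "f x < 0" unfolding h_def by (simp add: mult_less_0_iff)
  have "a < x" "x < b" using x fx out[of x] by force+
  have hd: "(h has_real_derivative exp (z * x) * (f' x + z * f x)) (at x)"
    unfolding h_def by (auto intro!: derivative_eq_intros deriv simp: algebra_simps)
  have "exp (z * x) * (f' x + z * f x) = 0"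
  proof (rule DERIV_local_min[OF hd, of "min (x - a) (b - x)"])
    show "0 < min (x - a) (b - x)" using \<open>a < x\<close> \<open>x < b\<close> by simp
    show "\<forall>y. \<bar>x - y\<bar> < min (x - a) (b - x) \<longrightarrow> h x \<le> h y"
      using min_h by (auto simp: abs_if split: if_splits)
  qed
  then show ?thesis using fx by auto
qed

lemma negative_between:
  fixes f f' f'' :: "real \<Rightarrow> real"
  assumes deriv: "\<And>x. (f has_real_derivative f' x) (at x)"
    and deriv2: "\<And>x. (f' has_real_derivative f'' x) (at x)"
    and pos2: "\<And>x. f'' x > 0"
    and "f a < 0" "f b < 0" "t \<in> {a..b}"
  shows "f t < 0"
proof -
  have "convex_on {a..b} f"
    using deriv deriv2 pos2 by (intro f''_ge0_imp_convex) (auto intro: less_imp_le)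
  then have "f t \<le> max (f a) (f b)"
    using convex_on_le_max assms(6) by blast
  then show ?thesis using assms(4,5) by linarith
qed

text \<open>On an interval where f < 0 the logarithmic derivative f'/f of a function with
  positive second derivative strictly decreases: its derivative is (f'' f - f'^2)/f^2 < 0.\<close>
lemma log_derivative_decreasing:
  fixes f f' f'' :: "real \<Rightarrow> real"
  assumes deriv: "\<And>x. (f has_real_derivative f' x) (at x)"
    and deriv2: "\<And>x. (f' has_real_derivative f'' x) (at x)"
    and pos2: "\<And>x. f'' x > 0"
    and "a < b" and "f a < 0" and "f b < 0"
  shows "f' b / f b < f' a / f a"
proof (rule DERIV_neg_imp_decreasing[of a b "\<lambda>t. f' t / f t"])
  fix t assume "a \<le> t" "t \<le> b"
  then have ft: "f t < 0"
    using negative_between[OF deriv deriv2 pos2 \<open>f a < 0\<close> \<open>f b < 0\<close>] by simp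
  have "((\<lambda>t. f' t / f t) has_real_derivative (f'' t * f t - f' t * f' t) / (f t * f t)) (at t)"
    using ft by (intro DERIV_divide deriv deriv2) simp
  moreover have "(f'' t * f t - f' t * f' t) / (f t * f t) < 0"
  proof (rule divide_neg_pos)
    have "f'' t * f t < 0" using pos2[of t] ft by (simp add: mult_pos_neg)
    then show "f'' t * f t - f' t * f' t < 0" by (smt (verit) zero_le_square)
    show "0 < f t * f t" using ft by (simp add: mult_neg_neg)
  qed
  ultimately show "\<exists>d. ((\<lambda>t. f' t / f t) has_real_derivative d) (at t) \<and> d < 0" by blast
qed (fact \<open>a < b\<close>)

text \<open>Hence exp(z x) f(x), whose derivative is exp(z x) (f'(x) + z f(x)), has at most one
  critical point in the region f < 0: at each such point f'/f takes the value -z.\<close>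
lemma weighted_critical_point_unique:
  fixes f f' f'' :: "real \<Rightarrow> real"
  assumes deriv: "\<And>x. (f has_real_derivative f' x) (at x)"
    and deriv2: "\<And>x. (f' has_real_derivative f'' x) (at x)"
    and pos2: "\<And>x. f'' x > 0"
    and x: "f x < 0" "f' x + z * f x = 0" and y: "f y < 0" "f' y + z * f y = 0"
  shows "x = y"
proof (rule ccontr)
  have quotient: "f' t / f t = - z" if "f t < 0" "f' t + z * f t = 0" for t
  proof -
    have "f' t = - z * f t" using that(2) by linarith
    then show ?thesis using that(1) by simp
  qed
  assume "x \<noteq> y"
  then consider "x < y" | "y < x" by linarith
  then show False
    using log_derivative_decreasing[OF deriv deriv2 pos2, of x y]
      log_derivative_decreasing[OF deriv deriv2 pos2, of y x]
      quotient[OF x] quotient[OF y] x(1) y(1)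
    by cases auto
qed

section \<open>The function fq\<close>

definition dfq :: "real^'n \<Rightarrow> real^'n \<Rightarrow> real^'n \<Rightarrow> real \<Rightarrow> real" where
  "dfq ce zv q x = (\<Sum>k\<in>UNIV. - (ce$k * zv$k * exp (- q$k - zv$k * x)))"

definition ddfq :: "real^'n \<Rightarrow> real^'n \<Rightarrow> real^'n \<Rightarrow> real \<Rightarrow> real" where
  "ddfq ce zv q x = (\<Sum>k\<in>UNIV. ce$k * (zv$k)\<^sup>2 * exp (- q$k - zv$k * x))"

lemma fq_has_derivative: "(fq ce zv q has_real_derivative dfq ce zv q x) (at x)"
  unfolding fq_def dfq_def
  by (auto intro!: derivative_eq_intros simp: algebra_simps)

lemma dfq_has_derivative: "(dfq ce zv q has_real_derivative ddfq ce zv q x) (at x)"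
  unfolding dfq_def ddfq_def
  by (auto intro!: derivative_eq_intros simp: algebra_simps power2_eq_square)

text \<open>Strict convexity: some valence is nonzero and every term is nonnegative.\<close>
lemma ddfq_pos:
  assumes "zv \<noteq> 0" and "\<forall>k. ce$k > 0"
  shows "ddfq ce zv q x > 0"
proof -
  obtain k where "zv$k \<noteq> 0" using assms(1) by (metis vec_eq_iff zero_index)
  then show ?thesis unfolding ddfq_def using assms(2)
    by (intro sum_pos2[where i=k]) (auto intro!: mult_nonneg_nonneg simp: less_imp_le)
qed

lemma dfq_strict_mono:
  assumes "zv \<noteq> 0" and "\<forall>k. ce$k > 0"
  shows "strict_mono (dfq ce zv q)"
proof (rule strict_monoI)
  fix x y :: real assume "x < y"
  then show "dfq ce zv q x < dfq ce zv q y"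
    by (rule DERIV_pos_imp_increasing) (use dfq_has_derivative ddfq_pos[OF assms] in blast)
qed

lemma fq_lower_bound:
  assumes "\<forall>k. ce$k > 0"
  shows "ce$k * exp (- q$k - zv$k * x) - (\<Sum>j\<in>UNIV. ce$j) \<le> fq ce zv q x"
proof -
  have "ce$k * exp (- q$k - zv$k * x) \<le> (\<Sum>j\<in>UNIV. ce$j * exp (- q$j - zv$j * x))"
    using assms by (intro member_le_sum) (auto intro: less_imp_le)
  moreover have "fq ce zv q x = (\<Sum>j\<in>UNIV. ce$j * exp (- q$j - zv$j * x)) - (\<Sum>j\<in>UNIV. ce$j)"
    unfolding fq_def by (simp add: algebra_simps sum_subtractf)
  ultimately show ?thesis by linarith
qed

lemma fq_at_top:
  assumes "zv$k < 0" and "\<forall>k. ce$k > 0"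
  shows "filterlim (fq ce zv q) at_top at_top"
proof (rule filterlim_at_top_mono)
  have exp_growth: "filterlim (\<lambda>x. a * exp (b - c * x) - S) at_top at_top"
    if "a > 0" "c < 0" for a b c S :: real
    using that by real_asymp
  show "filterlim (\<lambda>x. ce$k * exp (- q$k - zv$k * x) - (\<Sum>j\<in>UNIV. ce$j)) at_top at_top"
    using assms by (intro exp_growth) auto
  show "\<forall>\<^sub>F x in at_top. ce$k * exp (- q$k - zv$k * x) - (\<Sum>j\<in>UNIV. ce$j) \<le> fq ce zv q x"
    using fq_lower_bound[OF assms(2)] by simp
qed

lemma fq_mirror: "fq ce zv q (- x) = fq ce (- zv) q x"
  unfolding fq_def by simp

lemma fq_at_bot:
  assumes "zv$k > 0" and "\<forall>k. ce$k > 0"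
  shows "filterlim (fq ce zv q) at_top at_bot"
  using fq_at_top[of "- zv" k ce q] assms unfolding filterlim_at_bot_mirror fq_mirror by simp

lemma neutral_has_negative_valence:
  fixes zv ce :: "real^'n"
  assumes "zv \<noteq> 0" and "\<forall>k. ce$k > 0" and "(\<Sum>k\<in>UNIV. zv$k * ce$k) = 0"
  shows "\<exists>k. zv$k < 0"
proof (rule ccontr)
  assume "\<not> ?thesis"
  then have "\<forall>k. 0 \<le> zv$k * ce$k" using assms(2) by (simp add: not_less less_imp_le)
  then have "\<forall>k. zv$k * ce$k = 0"
    using assms(3) sum_nonneg_eq_0_iff[of UNIV "\<lambda>k. zv$k * ce$k"] by simp
  then have "zv = 0" using assms(2) by (simp add: vec_eq_iff) (metis less_irrefl mult_eq_0_iff)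
  then show False using assms(1) by blast
qed

lemma fq_coercive:
  assumes "zv \<noteq> 0" and "\<forall>k. ce$k > 0" and "(\<Sum>k\<in>UNIV. zv$k * ce$k) = 0"
  shows "filterlim (fq ce zv q) at_top at_top" and "filterlim (fq ce zv q) at_top at_bot"
proof -
  obtain k where "zv$k < 0" using neutral_has_negative_valence[OF assms] by blast
  then show "filterlim (fq ce zv q) at_top at_top" using fq_at_top assms(2) by blast
  have "- zv \<noteq> 0" "(\<Sum>k\<in>UNIV. (- zv)$k * ce$k) = 0"
    using assms(1,3) by (simp_all add: sum_negf)
  then obtain k where "zv$k > 0" using neutral_has_negative_valence[of "- zv"] assms(2) by auto
  then show "filterlim (fq ce zv q) at_top at_bot" using fq_at_bot assms(2) by blast
qed

lemma fq_unique_minimiser: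
  assumes "zv \<noteq> 0" and "\<forall>k. ce$k > 0" and "(\<Sum>k\<in>UNIV. zv$k * ce$k) = 0"
  shows "\<exists>!m. \<forall>x. fq ce zv q m \<le> fq ce zv q x"
proof -
  have "continuous_on UNIV (fq ce zv q)"
    using DERIV_isCont[OF fq_has_derivative] by (intro continuous_at_imp_continuous_on) blast
  then obtain m where m: "\<forall>x. fq ce zv q m \<le> fq ce zv q x"
    using coercive_attains_min fq_coercive[OF assms] by blast
  show ?thesis
    using m minimiser_unique[OF fq_has_derivative dfq_strict_mono[OF assms(1,2)] _ m] by (rule ex1I)
qed

lemma fq_weighted_critical_point:
  assumes "zv \<noteq> 0" and "\<forall>k. ce$k > 0" and "(\<Sum>k\<in>UNIV. zv$k * ce$k) = 0"
    and "fq ce zv q m < 0"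
  shows "\<exists>!\<phi>. fq ce zv q \<phi> < 0 \<and> dfq ce zv q \<phi> + z * fq ce zv q \<phi> = 0"
proof -
  obtain \<phi> where "fq ce zv q \<phi> < 0 \<and> dfq ce zv q \<phi> + z * fq ce zv q \<phi> = 0"
    using weighted_critical_point_exists[OF fq_has_derivative fq_coercive[OF assms(1-3)] assms(4)]
    by blast
  then show ?thesis
    using weighted_critical_point_unique[OF fq_has_derivative dfq_has_derivative ddfq_pos[OF assms(1,2)]]
    by (intro ex1I[of _ \<phi>]) blast+
qed

section \<open>Characterisation of steady states\<close>

text \<open>The concentrations in equilibrium with chemical potential -q at potential phi.\<close>
definition boltzmann :: "real^'n \<Rightarrow> real^'n \<Rightarrow> real^'n \<Rightarrow> real \<Rightarrow> real^'n" where
  "boltzmann ce zv q \<phi> = (\<chi> k. ce$k * exp (- q$k - zv$k * \<phi>))"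

lemma sum_boltzmann: "(\<Sum>k\<in>UNIV. boltzmann ce zv q \<phi> $ k) = fq ce zv q \<phi> + (\<Sum>k\<in>UNIV. ce$k)"
  unfolding fq_def boltzmann_def by (simp add: algebra_simps sum_subtractf)

lemma charge_boltzmann: "(\<Sum>k\<in>UNIV. zv$k * boltzmann ce zv q \<phi> $ k) = - dfq ce zv q \<phi>"
  unfolding dfq_def boltzmann_def by (simp add: algebra_simps sum_negf)

lemma chem_pot_eq_iff_boltzmann:
  assumes ce: "\<forall>k. ce$k > 0"
  shows "((\<forall>k. c$k > 0) \<and> chem_pot ce zv c \<phi> = - q) \<longleftrightarrow> c = boltzmann ce zv q \<phi>"
proof
  assume h: "(\<forall>k. c$k > 0) \<and> chem_pot ce zv c \<phi> = - q"
  have "c$k = ce$k * exp (- q$k - zv$k * \<phi>)" for k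
  proof -
    have "ln (c$k / ce$k) = - q$k - zv$k * \<phi>"
      using h unfolding chem_pot_def vec_eq_iff by (auto simp: algebra_simps)
    then have "c$k / ce$k = exp (- q$k - zv$k * \<phi>)"
      using h ce by (metis divide_pos_pos exp_ln)
    then show ?thesis using ce[rule_format, of k] by (simp add: field_simps)
  qed
  then show "c = boltzmann ce zv q \<phi>" unfolding boltzmann_def by (simp add: vec_eq_iff)
next
  assume "c = boltzmann ce zv q \<phi>"
  then show "(\<forall>k. c$k > 0) \<and> chem_pot ce zv c \<phi> = - q"
    using ce unfolding chem_pot_def boltzmann_def by (simp add: vec_eq_iff ln_mult) (metis less_irrefl)
qed

lemma spd_invertible:
  assumes "spd (L::real^'n^'n)"
  shows "invertible L"
proof -
  have "\<forall>x. L *v x = 0 \<longrightarrow> x = 0"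
    using assms unfolding spd_def by (metis inner_zero_right less_irrefl)
  then show ?thesis using matrix_left_invertible_ker invertible_left_inverse by blast
qed

lemma matrix_vector_mult_neg: "(M::'a::ring_1^'n^'m) *v (- x) = - (M *v x)"
  using matrix_vector_mult_diff_distrib[of M 0 x] by simp

lemma flux_balance_iff:
  assumes "invertible (L::real^'n^'n)"
  shows "L *v \<mu> + p = 0 \<longleftrightarrow> \<mu> = - (matrix_inv L *v p)"
proof -
  have "L ** matrix_inv L = mat 1"
    using someI_ex[OF assms[unfolded invertible_def]] unfolding matrix_inv_def by blast
  then have Lq: "L *v (- (matrix_inv L *v p)) = - p"
    by (simp add: matrix_vector_mult_neg matrix_vector_mul_assoc)
  have "L *v \<mu> + p = 0 \<longleftrightarrow> L *v \<mu> = L *v (- (matrix_inv L *v p))"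
    unfolding Lq by (simp add: eq_neg_iff_add_eq_0)
  also have "\<dots> \<longleftrightarrow> \<mu> = - (matrix_inv L *v p)"
    using inj_matrix_vector_mult[OF assms] by (auto dest: injD)
  finally show ?thesis .
qed

lemma ex1_param_iff:
  assumes "inj g" and "\<And>s. S s \<longleftrightarrow> (\<exists>x. P x \<and> s = g x)"
  shows "(\<exists>!s. S s) \<longleftrightarrow> (\<exists>!x. P x)"
  using assms unfolding inj_def by metis

lemma steady_state_iff:
  assumes spd: "spd L" and q: "q = matrix_inv L *v p" and ce: "\<forall>k. ce$k > 0" and A: "A > 0"
  shows "steady_state L p ce zv A z c v \<phi> \<longleftrightarrow>
    c = boltzmann ce zv q \<phi> \<and> v = - A / fq ce zv q \<phi> \<and>
    fq ce zv q \<phi> < 0 \<and> dfq ce zv q \<phi> + z * fq ce zv q \<phi> = 0"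
proof -
  have flux: "L *v chem_pot ce zv c \<phi> + p = 0 \<longleftrightarrow> chem_pot ce zv c \<phi> = - q"
    using flux_balance_iff[OF spd_invertible[OF spd]] q by simp
  have volume: "(v > 0 \<and> A / v = - f) \<longleftrightarrow> (v = - A / f \<and> f < 0)" for f
    using A by (auto simp: field_simps divide_pos_neg mult_less_0_iff)
  have conc: "((\<forall>k. c$k > 0) \<and> L *v chem_pot ce zv c \<phi> + p = 0) \<longleftrightarrow> c = boltzmann ce zv q \<phi>"
    using flux chem_pot_eq_iff_boltzmann[OF ce] by blast
  have "steady_state L p ce zv A z c v \<phi> \<longleftrightarrow> c = boltzmann ce zv q \<phi> \<and>
      v > 0 \<and> A / v = - fq ce zv q \<phi> \<and> - dfq ce zv q \<phi> + z * (A / v) = 0"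
    unfolding steady_state_def osm_pressure_def using conc
    by (auto simp: sum_boltzmann charge_boltzmann)
  also have "\<dots> \<longleftrightarrow> c = boltzmann ce zv q \<phi> \<and> v = - A / fq ce zv q \<phi> \<and>
      fq ce zv q \<phi> < 0 \<and> dfq ce zv q \<phi> + z * fq ce zv q \<phi> = 0"
    using A volume[of "fq ce zv q \<phi>"] by auto
  finally show ?thesis .
qed

lemma steady_state_ex1_iff:
  assumes "spd L" and "q = matrix_inv L *v p" and "\<forall>k. ce$k > 0" and "A > 0"
  shows "(\<exists>!s. steady_state L p ce zv A z (fst s) (fst (snd s)) (snd (snd s))) \<longleftrightarrow>
    (\<exists>!\<phi>. fq ce zv q \<phi> < 0 \<and> dfq ce zv q \<phi> + z * fq ce zv q \<phi> = 0)"
proof (rule ex1_param_iff)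
  show "inj (\<lambda>\<phi>. (boltzmann ce zv q \<phi>, - A / fq ce zv q \<phi>, \<phi>))"
    by (rule injI) simp
  show "steady_state L p ce zv A z (fst s) (fst (snd s)) (snd (snd s)) \<longleftrightarrow>
      (\<exists>\<phi>. (fq ce zv q \<phi> < 0 \<and> dfq ce zv q \<phi> + z * fq ce zv q \<phi> = 0) \<and>
        s = (boltzmann ce zv q \<phi>, - A / fq ce zv q \<phi>, \<phi>))" for s
    using steady_state_iff[OF assms] by (cases s) auto
qed

lemma steady_state_needs_negative_fq:
  assumes "spd L" and "q = matrix_inv L *v p" and "\<forall>k. ce$k > 0" and "A > 0"
    and "steady_state L p ce zv A z c v \<phi>"
  shows "fq ce zv q \<phi> < 0"
  using assms(5) steady_state_iff[OF assms(1-4)] by blast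

theorem proposition2:
  fixes L :: "real^'n^'n" and p ce zv :: "real^'n"
    and A z \<zeta> :: real
  assumes "CARD('n) \<ge> 2"
    and "zv \<noteq> 0"
    and "\<forall>k. ce$k > 0"
    and "(\<Sum>k\<in>UNIV. zv$k * ce$k) = 0"
    and "A > 0"
    and "spd L"
    and "\<zeta> > 0"
  shows "let q = matrix_inv L *v p; f = fq ce zv q in
    (\<exists>!\<phi>m. \<forall>\<phi>. f \<phi>m \<le> f \<phi>) \<and>
    (\<forall>\<phi>m. (\<forall>\<phi>. f \<phi>m \<le> f \<phi>) \<longrightarrow>
       (f \<phi>m < 0 \<longrightarrow>
          (\<exists>!s. steady_state L p ce zv A z (fst s) (fst (snd s)) (snd (snd s)))) \<and>
       (f \<phi>m \<ge> 0 \<longrightarrow>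
          \<not> (\<exists>c v \<phi>. steady_state L p ce zv A z c v \<phi>)))"
proof -
  define q where "q = matrix_inv L *v p"
  note steady = assms(6) q_def assms(3,5)
  have "\<exists>!s. steady_state L p ce zv A z (fst s) (fst (snd s)) (snd (snd s))"
    if "fq ce zv q m < 0" for m
    unfolding steady_state_ex1_iff[OF steady] using fq_weighted_critical_point[OF assms(2-4) that] .
  moreover have "\<not> (\<exists>c v \<phi>. steady_state L p ce zv A z c v \<phi>)"
    if "\<forall>x. fq ce zv q m \<le> fq ce zv q x" and "0 \<le> fq ce zv q m" for m
    using steady_state_needs_negative_fq[OF steady] that by (meson leD order_trans)
  ultimately show ?thesis
    unfolding Let_def q_def[symmetric] using fq_unique_minimiser[OF assms(2-4)] by blast
qed

end
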